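(* Let $a,b$ be positive integers, $h(j)=aj^2+b$ for $j\ge0$, $h(j)=0$ for $j<0$, and $\alpha=a/b$. Then $$\operatorname{hdepth}(h)=\begin{cases}\lfloor\alpha\rfloor+1,&\alpha\in(0,7),\\ 8,&\alpha\in[7,\tfrac{22}{3}],\\ 7,&\alpha\in(\tfrac{22}{3},8],\\ 6,&\alpha\in(8,11],\\ 5,&\alpha\in(11,\infty).\end{cases}$$
   Context: For a nonzero function $h:\mathbb Z\to\mathbb Z_{\ge 0}$ with $h(j)=0$ for all sufficiently negative $j$, and integers $k\le d$, set $\beta_k^d(h)=\sum_{j\le k}(-1)^{k-j}\binom{d-j}{k-j}h(j)$, and $\operatorname{hdepth}(h)=\max\{d\in\mathbb Z:\ \beta_k^d(h)\ge 0\text{ for all integers }k\le d\}$. *)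

theory Defs
  imports Complex_Main
begin

text \<open>Since h vanishes for sufficiently negative j, the sum is taken over the finite
  set of j <= k with h j nonzero (terms with h j = 0 contribute nothing).\<close>
definition beta :: "(int \<Rightarrow> int) \<Rightarrow> int \<Rightarrow> int \<Rightarrow> int" where
  "beta h k d = (\<Sum>j\<in>{j. j \<le> k \<and> h j \<noteq> 0}.
      (-1) ^ nat (k - j) * int (nat (d - j) choose nat (k - j)) * h j)"

definition hdepth :: "(int \<Rightarrow> int) \<Rightarrow> int" where
  "hdepth h = (GREATEST d::int. \<forall>k::int. k \<le> d \<longrightarrow> beta h k d \<ge> 0)"

end

theory Submission
  imports Defs
begin

text \<open>For h supported on the naturals, beta_k^d(h) is linear in h, so for h(j) = a j^2 + b
  each beta_k^d(h) equals a p + b q with integers p, q depending only on k and d. For d \<le> 8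
  the conditions beta_k^d(h) \<ge> 0 are therefore finitely many linear inequalities in a/b, read
  off from an explicit table. Large d are excluded by two closed forms:
  beta_1^d = a + b - b d forces d \<le> a/b + 1, and
  2 beta_2^d = 2a(5 - d) + b(d^2 - 3d + 4) is negative for every d \<ge> 7 once a/b > 8.\<close>

definition beta_nat :: "(nat \<Rightarrow> int) \<Rightarrow> nat \<Rightarrow> nat \<Rightarrow> int" where
  "beta_nat f k d = (\<Sum>i\<le>k. (-1) ^ (k - i) * int ((d - i) choose (k - i)) * f i)"

lemma beta_nat_linear:
  "beta_nat (\<lambda>i. a * f i + b * g i) k d = a * beta_nat f k d + b * beta_nat g k d"
  by (simp add: beta_nat_def algebra_simps sum.distrib sum_distrib_left)

lemma beta_nat_1: "beta_nat f 1 d = f 1 - int d * f 0"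
  by (simp add: beta_nat_def)

lemma beta_nat_2:
  assumes "d \<ge> 1"
  shows "2 * beta_nat f 2 d = int d * (int d - 1) * f 0 - 2 * (int d - 1) * f 1 + 2 * f 2"
proof -
  have choose2: "2 * int (d choose 2) = int d * (int d - 1)"
  proof -
    have "even (d * (d - 1))" by (cases "even d") auto
    then have "2 * (d choose 2) = d * (d - 1)" by (simp add: choose_two)
    then show ?thesis using assms by (metis of_nat_1 of_nat_diff of_nat_mult of_nat_numeral)
  qed
  have "beta_nat f 2 d = int (d choose 2) * f 0 - (int d - 1) * f 1 + f 2"
    using assms by (simp add: beta_nat_def numeral_2_eq_2 atMost_Suc of_nat_diff algebra_simps)
  then have "2 * beta_nat f 2 d = 2 * int (d choose 2) * f 0 - 2 * (int d - 1) * f 1 + 2 * f 2"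
    by (simp add: algebra_simps)
  then show ?thesis unfolding choose2 .
qed

lemma beta_neg_index:
  assumes "\<forall>j<0. h j = 0" and "k < 0"
  shows "beta h k d = 0"
  using assms by (simp add: beta_def)

lemma beta_eq_beta_nat:
  assumes h: "\<forall>j<0. h j = 0" and "0 \<le> k" "k \<le> d"
  shows "beta h k d = beta_nat (\<lambda>i. h (int i)) (nat k) (nat d)"
proof -
  have "beta h k d = (\<Sum>j\<in>{0..k}. (-1) ^ nat (k - j) * int (nat (d - j) choose nat (k - j)) * h j)"
    unfolding beta_def using h by (intro sum.mono_neutral_left) (force simp: not_le)+
  also have "\<dots> = (\<Sum>i\<le>nat k. (-1) ^ nat (k - int i) * int (nat (d - int i) choose nat (k - int i)) * h (int i))"
  proof -
    have "{0..k} = int ` {..nat k}"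
      using \<open>0 \<le> k\<close> by (auto simp: image_iff intro!: bexI[of _ "nat x" for x])
    then show ?thesis by (simp add: sum.reindex)
  qed
  also have "\<dots> = beta_nat (\<lambda>i. h (int i)) (nat k) (nat d)"
    unfolding beta_nat_def using assms(2,3) by (intro sum.cong) (auto simp: nat_diff_distrib)
  finally show ?thesis .
qed

definition betas_nonneg :: "(int \<Rightarrow> int) \<Rightarrow> int \<Rightarrow> bool" where
  "betas_nonneg h d \<longleftrightarrow> (\<forall>k\<le>d. 0 \<le> beta h k d)"

lemma hdepth_eqI:
  assumes "betas_nonneg h D" and "\<And>d. D < d \<Longrightarrow> \<not> betas_nonneg h d"
  shows "hdepth h = D"
  unfolding hdepth_def betas_nonneg_def[symmetric]
  using assms by (intro Greatest_equality) (auto simp: not_less[symmetric])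

lemma betas_nonneg_iff_beta_nat:
  assumes "\<forall>j<0. h j = 0"
  shows "betas_nonneg h (int n) \<longleftrightarrow> (\<forall>k\<le>n. 0 \<le> beta_nat (\<lambda>i. h (int i)) k n)"
proof -
  have "0 \<le> beta h k (int n) \<longleftrightarrow> 0 \<le> beta_nat (\<lambda>i. h (int i)) (nat k) n"
    if "0 \<le> k" "k \<le> int n" for k
    using beta_eq_beta_nat[OF assms that] by simp
  then show ?thesis
    unfolding betas_nonneg_def using beta_neg_index[OF assms]
    by (smt (verit) nat_int nat_le_iff of_nat_0_le_iff)
qed

definition beta_table :: "nat \<Rightarrow> (int \<times> int) list" where
  "beta_table n = map (\<lambda>k. (beta_nat (\<lambda>i. int i ^ 2) k n, beta_nat (\<lambda>_. 1) k n)) [0..<Suc n]"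

locale square_plus_const =
  fixes a b :: int and h :: "int \<Rightarrow> int"
  assumes a_pos: "0 < a" and b_pos: "0 < b"
    and h_eq: "\<And>j. h j = (if j \<ge> 0 then a * j ^ 2 + b else 0)"
begin

lemma h_vanishes_neg: "\<forall>j<0. h j = 0"
  by (simp add: h_eq)

lemma h_of_nat: "h (int i) = a * int i ^ 2 + b"
  by (simp add: h_eq)

lemma betas_nonneg_iff_table:
  "betas_nonneg h (int n) \<longleftrightarrow> list_all (\<lambda>(p, q). 0 \<le> a * p + b * q) (beta_table n)"
proof -
  have "beta_nat (\<lambda>i. h (int i)) k n = a * beta_nat (\<lambda>i. int i ^ 2) k n + b * beta_nat (\<lambda>_. 1) k n" for k
    using beta_nat_linear[of a "\<lambda>i. int i ^ 2" b "\<lambda>_. 1"] by (simp add: h_of_nat)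
  then show ?thesis
    unfolding betas_nonneg_iff_beta_nat[OF h_vanishes_neg] beta_table_def list_all_iff
    by (auto simp: less_Suc_eq_le)
qed

lemma beta_1:
  assumes "1 \<le> d"
  shows "beta h 1 d = a + b - b * d"
proof -
  have "beta h 1 d = beta_nat (\<lambda>i. h (int i)) 1 (nat d)"
    using beta_eq_beta_nat[OF h_vanishes_neg, of 1 d] assms by simp
  also have "\<dots> = h 1 - d * h 0"
    using assms beta_nat_1[of "\<lambda>i. h (int i)" "nat d"] by simp
  finally show ?thesis by (simp add: h_eq)
qed

lemma beta_2:
  assumes "2 \<le> d"
  shows "2 * beta h 2 d = 2 * a * (5 - d) + b * (d^2 - 3 * d + 4)"
proof -
  have "2 * beta h 2 d = 2 * beta_nat (\<lambda>i. h (int i)) 2 (nat d)"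
    using beta_eq_beta_nat[OF h_vanishes_neg, of 2 d] assms by simp
  also have "\<dots> = d * (d - 1) * h 0 - 2 * (d - 1) * h 1 + 2 * h 2"
    using assms beta_nat_2[of "nat d" "\<lambda>i. h (int i)"] by simp
  finally show ?thesis by (simp add: h_eq algebra_simps power2_eq_square)
qed

lemma betas_nonneg_linear_bound: "betas_nonneg h d \<Longrightarrow> 1 \<le> d \<Longrightarrow> b * (d - 1) \<le> a"
  using beta_1 by (force simp: betas_nonneg_def algebra_simps)

lemma betas_nonneg_quadratic_bound:
  "betas_nonneg h d \<Longrightarrow> 2 \<le> d \<Longrightarrow> 2 * a * (d - 5) \<le> b * (d^2 - 3 * d + 4)"
  using beta_2 by (force simp: betas_nonneg_def algebra_simps)

lemma betas_nonneg_1: "betas_nonneg h 1"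
proof -
  have "beta_table 1 = [(0, 1), (1, 0)]" by code_simp
  then show ?thesis using betas_nonneg_iff_table[of 1] a_pos b_pos by auto
qed

lemma betas_nonneg_2: "betas_nonneg h 2 \<longleftrightarrow> b \<le> a"
proof -
  have "beta_table 2 = [(0, 1), (1, -1), (3, 1)]" by code_simp
  then show ?thesis using betas_nonneg_iff_table[of 2] a_pos b_pos by auto
qed

lemma betas_nonneg_3: "betas_nonneg h 3 \<longleftrightarrow> 2 * b \<le> a"
proof -
  have "beta_table 3 = [(0, 1), (1, -2), (2, 2), (6, 0)]" by code_simp
  then show ?thesis using betas_nonneg_iff_table[of 3] a_pos b_pos by auto
qed

lemma betas_nonneg_4: "betas_nonneg h 4 \<longleftrightarrow> 3 * b \<le> a"
proof -
  have "beta_table 4 = [(0, 1), (1, -3), (1, 4), (4, -2), (10, 1)]" by code_simp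
  then show ?thesis using betas_nonneg_iff_table[of 4] a_pos b_pos by auto
qed

lemma betas_nonneg_5: "betas_nonneg h 5 \<longleftrightarrow> 4 * b \<le> a"
proof -
  have "beta_table 5 = [(0, 1), (1, -4), (0, 7), (3, -6), (6, 3), (15, 0)]" by code_simp
  then show ?thesis using betas_nonneg_iff_table[of 5] a_pos b_pos by auto
qed

lemma betas_nonneg_6: "betas_nonneg h 6 \<longleftrightarrow> 5 * b \<le> a \<and> a \<le> 11 * b"
proof -
  have "beta_table 6 = [(0, 1), (1, -5), (-1, 11), (3, -13), (3, 9), (9, -3), (21, 1)]" by code_simp
  then show ?thesis using betas_nonneg_iff_table[of 6] a_pos b_pos by auto
qed

lemma betas_nonneg_7: "betas_nonneg h 7 \<longleftrightarrow> 6 * b \<le> a \<and> a \<le> 8 * b"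
proof -
  have "beta_table 7 = [(0, 1), (1, -6), (-2, 16), (4, -24), (0, 22), (6, -12), (12, 4), (28, 0)]" by code_simp
  then show ?thesis using betas_nonneg_iff_table[of 7] a_pos b_pos by auto
qed

lemma betas_nonneg_8: "betas_nonneg h 8 \<longleftrightarrow> 7 * b \<le> a \<and> 3 * a \<le> 22 * b"
proof -
  have "beta_table 8 = [(0, 1), (1, -7), (-3, 22), (6, -40), (-4, 46), (6, -34), (6, 16), (16, -4), (36, 1)]" by code_simp
  then show ?thesis using betas_nonneg_iff_table[of 8] a_pos b_pos by auto
qed

lemma not_betas_nonneg_beyond:
  assumes "a < b * D" and "0 \<le> D" and "D < d"
  shows "\<not> betas_nonneg h d"
proof
  assume "betas_nonneg h d"
  then have "b * (d - 1) \<le> a" using assms by (intro betas_nonneg_linear_bound) auto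
  moreover have "b * D \<le> b * (d - 1)" using assms b_pos by (intro mult_left_mono) auto
  ultimately show False using assms(1) by linarith
qed

lemma not_betas_nonneg_ge_7:
  assumes "8 * b < a" and "7 \<le> d"
  shows "\<not> betas_nonneg h d"
proof
  assume ok: "betas_nonneg h d"
  then have "0 \<le> (d - 7) * (a + b - b * d)"
    using betas_nonneg_linear_bound[OF ok] assms(2)
    by (intro mult_nonneg_nonneg) (auto simp: algebra_simps)
  moreover have "12 * b < (a - 5 * b) * (d - 3)"
  proof -
    have "(a - 5 * b) * 4 \<le> (a - 5 * b) * (d - 3)"
      using assms b_pos by (intro mult_left_mono) auto
    moreover have "(a - 5 * b) * 4 = 4 * a - 20 * b" by simp
    ultimately show ?thesis using assms(1) by linarith
  qed
  moreover have "2 * a * (d - 5) - b * (d^2 - 3 * d + 4)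
      = (d - 7) * (a + b - b * d) + (a - 5 * b) * (d - 3) - 12 * b"
    by (simp add: algebra_simps power2_eq_square)
  ultimately have "b * (d^2 - 3 * d + 4) < 2 * a * (d - 5)"
    using assms(1) by linarith
  then show False using betas_nonneg_quadratic_bound[OF ok] assms(2) by simp
qed

lemma hdepth_below_7:
  assumes "a < 7 * b"
  shows "hdepth h = a div b + 1"
proof (rule hdepth_eqI)
  define q where "q = a div b"
  have "b * q + a mod b = a" "0 \<le> a mod b" "a mod b < b"
    using b_pos unfolding q_def by simp_all
  then have q: "b * q \<le> a" "a < b * (q + 1)"
    by (simp_all add: algebra_simps)
  have "0 \<le> q" using a_pos b_pos by (simp add: q_def pos_imp_zdiv_nonneg_iff)
  moreover have "q < 7"
  proof (rule ccontr)
    assume "\<not> q < 7"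
    then have "b * 7 \<le> b * q" using b_pos by (intro mult_left_mono) auto
    then show False using q assms by linarith
  qed
  ultimately consider "q = 0" | "q = 1" | "q = 2" | "q = 3" | "q = 4" | "q = 5" | "q = 6"
    by linarith
  then show "betas_nonneg h (a div b + 1)"
    unfolding q_def[symmetric]
    by cases (use q assms in \<open>simp_all add: betas_nonneg_1 betas_nonneg_2 betas_nonneg_3
      betas_nonneg_4 betas_nonneg_5 betas_nonneg_6 betas_nonneg_7\<close>)
  show "\<not> betas_nonneg h d" if "a div b + 1 < d" for d
    using not_betas_nonneg_beyond[of "q + 1"] q \<open>0 \<le> q\<close> that by (simp add: q_def)
qed

lemma hdepth_7_to_22_thirds:
  assumes "7 * b \<le> a" and "3 * a \<le> 22 * b"
  shows "hdepth h = 8"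
proof (rule hdepth_eqI)
  show "betas_nonneg h 8" using assms betas_nonneg_8 by simp
  show "\<not> betas_nonneg h d" if "8 < d" for d
    using not_betas_nonneg_beyond[of 8 d] assms b_pos that by simp
qed

lemma hdepth_22_thirds_to_8:
  assumes "22 * b < 3 * a" and "a \<le> 8 * b"
  shows "hdepth h = 7"
proof (rule hdepth_eqI)
  show "betas_nonneg h 7" using assms betas_nonneg_7 by simp
  show "\<not> betas_nonneg h d" if d: "7 < d" for d
  proof -
    consider "d = 8" | "d = 9" | "9 < d" using d by linarith
    then show ?thesis
    proof cases
      case 1 then show ?thesis using assms betas_nonneg_8 by simp
    next
      case 2 then show ?thesis using assms b_pos betas_nonneg_quadratic_bound[of 9] by auto
    next
      case 3 then show ?thesis using not_betas_nonneg_beyond[of 9 d] assms b_pos by simp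
    qed
  qed
qed

lemma hdepth_8_to_11:
  assumes "8 * b < a" and "a \<le> 11 * b"
  shows "hdepth h = 6"
proof (rule hdepth_eqI)
  show "betas_nonneg h 6" using assms betas_nonneg_6 by simp
  show "\<not> betas_nonneg h d" if "6 < d" for d
    using not_betas_nonneg_ge_7 assms that by simp
qed

lemma hdepth_above_11:
  assumes "11 * b < a"
  shows "hdepth h = 5"
proof (rule hdepth_eqI)
  show "betas_nonneg h 5" using assms b_pos betas_nonneg_5 by simp
  show "\<not> betas_nonneg h d" if "5 < d" for d
  proof (cases "d = 6")
    case True then show ?thesis using assms betas_nonneg_quadratic_bound[of 6] by auto
  next
    case False then show ?thesis using not_betas_nonneg_ge_7 assms b_pos that by simp
  qed
qed

end

theorem theorem3p10:
  fixes a b :: int and h :: "int \<Rightarrow> int" and \<alpha> :: real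
  assumes "a > 0" and "b > 0"
    and "\<And>j. h j = (if j \<ge> 0 then a * j ^ 2 + b else 0)"
    and "\<alpha> = real_of_int a / real_of_int b"
  shows "hdepth h =
    (if \<alpha> < 7 then \<lfloor>\<alpha>\<rfloor> + 1
     else if \<alpha> \<le> 22 / 3 then 8
     else if \<alpha> \<le> 8 then 7
     else if \<alpha> \<le> 11 then 6
     else 5)"
proof -
  interpret square_plus_const a b h
    using assms(1-3) by unfold_locales
  have b: "real_of_int b > 0" using assms(2) by simp
  have lt: "\<alpha> < r \<longleftrightarrow> a < r * b" and le: "\<alpha> \<le> r \<longleftrightarrow> a \<le> r * b" for r :: real
    using b by (simp_all add: assms(4) pos_divide_less_eq pos_divide_le_eq)
  have "\<alpha> < 7 \<longleftrightarrow> a < 7 * b" "\<alpha> \<le> 22 / 3 \<longleftrightarrow> 3 * a \<le> 22 * b"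
    "\<alpha> \<le> 8 \<longleftrightarrow> a \<le> 8 * b" "\<alpha> \<le> 11 \<longleftrightarrow> a \<le> 11 * b"
    using lt[of 7] le[of "22 / 3"] le[of 8] le[of 11] by linarith+
  moreover have "\<lfloor>\<alpha>\<rfloor> = a div b"
    using assms(4) by (simp add: floor_divide_of_int_eq)
  ultimately show ?thesis
    using hdepth_below_7 hdepth_7_to_22_thirds hdepth_22_thirds_to_8 hdepth_8_to_11 hdepth_above_11
    by (simp add: not_less not_le)
qed

end
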